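(* Let $\Gamma$ be a quantum graph with $N$ internal edges of lengths $\ell_j=\ell_j(t)$ ($C^2$ in $t$, at least some non-constant near $t=0$) and external half-lines, with general self-adjoint vertex coupling, having at $t=0$ an embedded eigenvalue $k_0^2>0$, and let $k=k(t)$ be the solution near $k_0$ of the resonance condition $\sum_{\bar\gamma}(-1)^{m_{\bar\gamma}}A_{\bar\gamma}(k)\mathrm{e}^{ik\ell_{\bar\gamma}(t)}=0$ for small $t$. Assume that all the coefficients $A_{\bar\gamma}$ are $k$-independent and real. Then (at $t=0$, $k=k_0$) $$\dot k = -k\, \frac{\sum_{\bar\gamma}\dot \ell_{\bar\gamma}(-1)^{m_{\bar\gamma}}A_{\bar\gamma}\cos{k\ell_{\bar\gamma}}}{\sum_{\bar\gamma}\ell_{\bar\gamma}(-1)^{m_{\bar\gamma}}A_{\bar\gamma}\cos{k\ell_{\bar\gamma}}},$$ and, with $C=\sum_{\bar\gamma}\ell_{\bar\gamma}(-1)^{m_{\bar\gamma}}A_{\bar\gamma}\cos k\ell_{\bar\gamma}$, $S=\sum_{\bar\gamma}\ell_{\bar\gamma}(-1)^{m_{\bar\gamma}}A_{\bar\gamma}\sin k\ell_{\bar\gamma}$, $d=C^2+S^2$, $$X=2\dot k \sum_{\bar\gamma} (k \dot \ell_{\bar\gamma}\ell_{\bar\gamma}\cos{k\ell_{\bar\gamma}}+\dot \ell_{\bar\gamma}\sin{k\ell_{\bar\gamma}})A_{\bar\gamma}(-1)^{m_{\bar\gamma}}+(\dot k)^2\sum_{\bar\gamma}\ell_{\bar\gamma}^2(-1)^{m_{\bar\gamma}}A_{\bar\gamma}\cos{k\ell_{\bar\gamma}}+k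 \sum_{\bar\gamma}(k(\dot\ell_{\bar\gamma})^2\cos{k\ell_{\bar\gamma}}+\ddot\ell_{\bar\gamma}\sin{k\ell_{\bar\gamma}})(-1)^{m_{\bar\gamma}}A_{\bar\gamma},$$ $$Y=2\dot k \sum_{\bar\gamma} (-k \dot \ell_{\bar\gamma}\ell_{\bar\gamma}\sin{k\ell_{\bar\gamma}}+\dot \ell_{\bar\gamma}\cos{k\ell_{\bar\gamma}})A_{\bar\gamma}(-1)^{m_{\bar\gamma}}-(\dot k)^2\sum_{\bar\gamma}\ell_{\bar\gamma}^2(-1)^{m_{\bar\gamma}}A_{\bar\gamma}\sin{k\ell_{\bar\gamma}}+k \sum_{\bar\gamma}(\ddot\ell_{\bar\gamma}\cos{k\ell_{\bar\gamma}}-k(\dot\ell_{\bar\gamma})^2\sin{k\ell_{\bar\gamma}})(-1)^{m_{\bar\gamma}}A_{\bar\gamma},$$ one has $$\mathrm{Im\,}\ddot k=-\frac{C}{d}X+\frac{S}{d}Y,\qquad \mathrm{Re\,}\ddot k=-\frac{S}{d}X-\frac{C}{d}Y.$$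
   Context: Metric graph: internal edges identified with $(0,\ell_j)$, leads with $(0,\infty)$; Hamiltonian $-d^2/dx^2$ with coupling conditions $(U_v-I)\Psi_v+i(U_v+I)\Psi_v'=0$ at each vertex ($U_v$ unitary, $\Psi_v$ boundary values, $\Psi'_v$ outgoing derivatives). Effective vertex-scattering matrix $\tilde\sigma^{(v)}(k)$ at a vertex with $n$ internal edges: maps incoming amplitudes $a_j^{\mathrm{in}}$ to outgoing amplitudes $a_j^{\mathrm{out}}$ for $f_j(x)=a_j^{\mathrm{in}}\mathrm{e}^{-ikx}+a_j^{\mathrm{out}}\mathrm{e}^{ikx}$ on internal edges ($x=0$ at the vertex), with purely outgoing $b_s\mathrm{e}^{ikx}$ on the leads. Each internal edge gives two oppositely oriented bonds; $S_{b'b}$ is the $\tilde\sigma^{(v)}$ entry for passing from bond $b$ into bond $b'$ at the vertex $v$ where $b$ ends and $b'$ begins. For a periodic orbit $\gamma=(b_1,\dots,b_n)$, $A_\gamma=S_{b_2b_1}\cdots S_{b_1b_n}$, $\ell_\gamma=\sum\ell_{b_j}$. An irreducible pseudo-orbit $\bar\gamma$ is a collection of periodic orbits using no bond more than once (including the empty one with $A=1$, $\ell=0$, $m=0$); $A_{\bar\gamma}$ is the product of the $A_\gamma$, $\ell_{\bar\gamma}$ the sum of lengths, $m_{\bar\gamma}$ the number of orbits. Dots denote derivatives in $t$. *)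

theory Defs
  imports "HOL-Analysis.Analysis"
begin

text \<open>Irreducible pseudo-orbits are indexed by a finite set P; nb p j (0, 1 or 2)
  is the number of bonds of pseudo-orbit p lying on edge j (each bond used at
  most once, each edge carries two bonds).  m p is the number of periodic orbits
  of p and A p its (by assumption k-independent, real) coefficient.\<close>

definition po_len :: "nat \<Rightarrow> ('p \<Rightarrow> nat \<Rightarrow> nat) \<Rightarrow> (nat \<Rightarrow> real \<Rightarrow> real) \<Rightarrow> 'p \<Rightarrow> real \<Rightarrow> real" where
  "po_len N nb ell p t = (\<Sum>j<N. real (nb p j) * ell j t)"

definition res_cond :: "'p set \<Rightarrow> ('p \<Rightarrow> nat) \<Rightarrow> ('p \<Rightarrow> real) \<Rightarrow> ('p \<Rightarrow> real \<Rightarrow> real) \<Rightarrow> real \<Rightarrow> complex \<Rightarrow> complex" where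
  "res_cond P m A L t z = (\<Sum>p\<in>P. of_real ((-1) ^ m p * A p) * exp (\<i> * z * of_real (L p t)))"


text \<open>Quantities C, S, X, Y of the theorem, for given pseudo-orbit data:
  L p, Ld p, Ldd p are the length of p and its first two t-derivatives at t = 0,
  k0 the value of k and kd the (real) value of the t-derivative of k at t = 0.\<close>

definition C_sum :: "'p set \<Rightarrow> ('p \<Rightarrow> nat) \<Rightarrow> ('p \<Rightarrow> real) \<Rightarrow> ('p \<Rightarrow> real) \<Rightarrow> real \<Rightarrow> real" where
  "C_sum P m A L k0 = (\<Sum>p\<in>P. L p * (-1) ^ m p * A p * cos (k0 * L p))"

definition S_sum :: "'p set \<Rightarrow> ('p \<Rightarrow> nat) \<Rightarrow> ('p \<Rightarrow> real) \<Rightarrow> ('p \<Rightarrow> real) \<Rightarrow> real \<Rightarrow> real" where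
  "S_sum P m A L k0 = (\<Sum>p\<in>P. L p * (-1) ^ m p * A p * sin (k0 * L p))"

definition X_sum :: "'p set \<Rightarrow> ('p \<Rightarrow> nat) \<Rightarrow> ('p \<Rightarrow> real) \<Rightarrow> ('p \<Rightarrow> real) \<Rightarrow> ('p \<Rightarrow> real) \<Rightarrow> ('p \<Rightarrow> real) \<Rightarrow> real \<Rightarrow> real \<Rightarrow> real" where
  "X_sum P m A L Ld Ldd k0 kd =
     2 * kd * (\<Sum>p\<in>P. (k0 * Ld p * L p * cos (k0 * L p) + Ld p * sin (k0 * L p)) * A p * (-1) ^ m p)
     + kd\<^sup>2 * (\<Sum>p\<in>P. (L p)\<^sup>2 * (-1) ^ m p * A p * cos (k0 * L p))
     + k0 * (\<Sum>p\<in>P. (k0 * (Ld p)\<^sup>2 * cos (k0 * L p) + Ldd p * sin (k0 * L p)) * (-1) ^ m p * A p)"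

definition Y_sum :: "'p set \<Rightarrow> ('p \<Rightarrow> nat) \<Rightarrow> ('p \<Rightarrow> real) \<Rightarrow> ('p \<Rightarrow> real) \<Rightarrow> ('p \<Rightarrow> real) \<Rightarrow> ('p \<Rightarrow> real) \<Rightarrow> real \<Rightarrow> real \<Rightarrow> real" where
  "Y_sum P m A L Ld Ldd k0 kd =
     2 * kd * (\<Sum>p\<in>P. (- k0 * Ld p * L p * sin (k0 * L p) + Ld p * cos (k0 * L p)) * A p * (-1) ^ m p)
     - kd\<^sup>2 * (\<Sum>p\<in>P. (L p)\<^sup>2 * (-1) ^ m p * A p * sin (k0 * L p))
     + k0 * (\<Sum>p\<in>P. (Ldd p * cos (k0 * L p) - k0 * (Ld p)\<^sup>2 * sin (k0 * L p)) * (-1) ^ m p * A p)"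

end

theory Submission
  imports Defs
begin

(* The resonance condition says that F(t) = sum of (-1)^m A exp(i k(t) l(t)) vanishes
   identically near t = 0, so F' and F'' vanish at 0.  Since Im k <= 0 = Im k(0), Im k has a
   local maximum at 0 and k'(0) is real.  At t = 0 all phases i k l are purely imaginary, so
   each of F'(0) = 0 and F''(0) = 0 splits into two real equations: the first is linear in
   k'(0), the second reads X = - C Im k'' - S Re k'', Y = S Im k'' - C Re k'', a linear system
   with determinant -(C^2 + S^2). *)

lemma has_vector_derivative_eq_0_if_vanishing:
  assumes "(f has_vector_derivative f') (at t)" "open S" "t \<in> S"
    and "\<And>s. s \<in> S \<Longrightarrow> f s = 0"
  shows "f' = 0"
proof -
  have "((\<lambda>_. 0) has_vector_derivative 0) (at t)"
    by simp
  then have "(f has_vector_derivative 0) (at t)"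
    by (rule has_vector_derivative_transform_within_open) (use assms in auto)
  with assms(1) show ?thesis
    by (rule vector_derivative_unique_at)
qed

lemma Im_vector_derivative_eq_0_at_local_max:
  fixes k :: "real \<Rightarrow> complex"
  assumes "(k has_vector_derivative k') (at t)" "\<delta> > 0"
    and "\<And>s. \<bar>t - s\<bar> < \<delta> \<Longrightarrow> Im (k s) \<le> Im (k t)"
  shows "Im k' = 0"
proof (rule DERIV_local_max[OF _ \<open>\<delta> > 0\<close>])
  show "((\<lambda>s. Im (k s)) has_real_derivative Im k') (at t)"
    using bounded_linear.has_vector_derivative[OF bounded_linear_Im assms(1)]
    by (simp add: has_real_derivative_iff_has_vector_derivative)
qed (use assms(3) in blast)

lemma exp_sum_derivatives_vanish:
  fixes a :: "'p \<Rightarrow> complex" and \<phi> \<phi>1 :: "'p \<Rightarrow> real \<Rightarrow> complex"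
  assumes "open S" "t0 \<in> S"
    and vanish: "\<And>t. t \<in> S \<Longrightarrow> (\<Sum>p\<in>P. a p * exp (\<phi> p t)) = 0"
    and d1: "\<And>p t. t \<in> S \<Longrightarrow> (\<phi> p has_vector_derivative \<phi>1 p t) (at t)"
    and d2: "\<And>p. (\<phi>1 p has_vector_derivative \<phi>2 p) (at t0)"
  shows "(\<Sum>p\<in>P. a p * exp (\<phi> p t0) * \<phi>1 p t0) = 0"
    and "(\<Sum>p\<in>P. a p * exp (\<phi> p t0) * (\<phi>2 p + (\<phi>1 p t0)\<^sup>2)) = 0"
proof -
  have exp_deriv: "((\<lambda>t. exp (\<phi> p t)) has_vector_derivative exp (\<phi> p t) * \<phi>1 p t) (at t)"
    if "t \<in> S" for p t
    using field_vector_diff_chain_at[OF d1[OF that] DERIV_exp] by (simp add: o_def mult.commute)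
  have first: "(\<Sum>p\<in>P. a p * exp (\<phi> p t) * \<phi>1 p t) = 0" if "t \<in> S" for t
  proof (rule has_vector_derivative_eq_0_if_vanishing[OF _ \<open>open S\<close> that vanish])
    show "((\<lambda>t. \<Sum>p\<in>P. a p * exp (\<phi> p t)) has_vector_derivative
        (\<Sum>p\<in>P. a p * exp (\<phi> p t) * \<phi>1 p t)) (at t)"
      by (rule derivative_eq_intros exp_deriv[OF that] | simp add: mult.assoc)+
  qed
  then show "(\<Sum>p\<in>P. a p * exp (\<phi> p t0) * \<phi>1 p t0) = 0"
    using \<open>t0 \<in> S\<close> .
  show "(\<Sum>p\<in>P. a p * exp (\<phi> p t0) * (\<phi>2 p + (\<phi>1 p t0)\<^sup>2)) = 0"
  proof (rule has_vector_derivative_eq_0_if_vanishing[OF _ \<open>open S\<close> \<open>t0 \<in> S\<close> first])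
    show "((\<lambda>t. \<Sum>p\<in>P. a p * exp (\<phi> p t) * \<phi>1 p t) has_vector_derivative
        (\<Sum>p\<in>P. a p * exp (\<phi> p t0) * (\<phi>2 p + (\<phi>1 p t0)\<^sup>2))) (at t0)"
      by (rule derivative_eq_intros exp_deriv[OF \<open>t0 \<in> S\<close>] d2
          | simp add: algebra_simps power2_eq_square)+
  qed
qed

lemma sum_cis_eq_0_iff:
  "(\<Sum>p\<in>P. of_real (a p) * cis (\<theta> p) * Complex (\<alpha> p) (\<beta> p)) = 0 \<longleftrightarrow>
     (\<Sum>p\<in>P. a p * (cos (\<theta> p) * \<alpha> p - sin (\<theta> p) * \<beta> p)) = 0 \<and>
     (\<Sum>p\<in>P. a p * (sin (\<theta> p) * \<alpha> p + cos (\<theta> p) * \<beta> p)) = 0"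
  by (simp add: complex_eq_iff algebra_simps)

lemma po_len_has_real_derivative:
  assumes "\<And>j. j < N \<Longrightarrow> (ell j has_real_derivative ell1 j t) (at t)"
  shows "((\<lambda>t. po_len N nb ell p t) has_real_derivative po_len N nb ell1 p t) (at t)"
  unfolding po_len_def using assms by (auto intro!: derivative_eq_intros simp: mult.commute)

lemma X_sum_eq:
  "X_sum P m A L Ld Ldd \<kappa> \<kappa>1 = (\<Sum>p\<in>P. (-1) ^ m p * A p *
     ((\<kappa>1 * L p + \<kappa> * Ld p)\<^sup>2 * cos (\<kappa> * L p) + (2 * \<kappa>1 * Ld p + \<kappa> * Ldd p) * sin (\<kappa> * L p)))"
  unfolding X_sum_def
  by (simp add: sum_distrib_left sum.distrib[symmetric] power2_eq_square algebra_simps)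

lemma Y_sum_eq:
  "Y_sum P m A L Ld Ldd \<kappa> \<kappa>1 = (\<Sum>p\<in>P. (-1) ^ m p * A p *
     ((2 * \<kappa>1 * Ld p + \<kappa> * Ldd p) * cos (\<kappa> * L p) - (\<kappa>1 * L p + \<kappa> * Ld p)\<^sup>2 * sin (\<kappa> * L p)))"
  unfolding Y_sum_def
  by (simp add: sum_distrib_left sum.distrib[symmetric] sum_subtractf[symmetric]
      power2_eq_square algebra_simps)

lemma CS_linear_system_solve:
  fixes C S X Y x y :: real
  assumes X: "X = - y * C - x * S" and Y: "Y = y * S - x * C" and d: "C\<^sup>2 + S\<^sup>2 \<noteq> 0"
  shows "y = - C / (C\<^sup>2 + S\<^sup>2) * X + S / (C\<^sup>2 + S\<^sup>2) * Y"
    and "x = - S / (C\<^sup>2 + S\<^sup>2) * X - C / (C\<^sup>2 + S\<^sup>2) * Y"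
proof -
  have "y * (C\<^sup>2 + S\<^sup>2) = - C * X + S * Y" and "x * (C\<^sup>2 + S\<^sup>2) = - S * X - C * Y"
    unfolding X Y by (simp_all add: algebra_simps power2_eq_square)
  with d have "y = (- C * X + S * Y) / (C\<^sup>2 + S\<^sup>2)" and "x = (- S * X - C * Y) / (C\<^sup>2 + S\<^sup>2)"
    by (simp_all add: eq_divide_eq)
  then show "y = - C / (C\<^sup>2 + S\<^sup>2) * X + S / (C\<^sup>2 + S\<^sup>2) * Y"
    and "x = - S / (C\<^sup>2 + S\<^sup>2) * X - C / (C\<^sup>2 + S\<^sup>2) * Y"
    by (simp_all add: add_divide_distrib diff_divide_distrib)
qed

lemma res_cond_derivative_equations:
  fixes L L1 :: "'p \<Rightarrow> real \<Rightarrow> real" and L2 :: "'p \<Rightarrow> real"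
    and k k1 :: "real \<Rightarrow> complex" and k2 :: complex
  assumes "open S" "t0 \<in> S"
    and reson: "\<And>t. t \<in> S \<Longrightarrow> res_cond P m A L t (k t) = 0"
    and dL: "\<And>p t. t \<in> S \<Longrightarrow> (L p has_real_derivative L1 p t) (at t)"
    and dL1: "\<And>p. (L1 p has_real_derivative L2 p) (at t0)"
    and dk: "\<And>t. t \<in> S \<Longrightarrow> (k has_vector_derivative k1 t) (at t)"
    and dk1: "(k1 has_vector_derivative k2) (at t0)"
    and k_t0: "k t0 = of_real \<kappa>" and k1_t0: "k1 t0 = of_real \<kappa>1"
  shows "\<kappa>1 * C_sum P m A (\<lambda>p. L p t0) \<kappa>
           + \<kappa> * (\<Sum>p\<in>P. L1 p t0 * (-1) ^ m p * A p * cos (\<kappa> * L p t0)) = 0"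
    and "X_sum P m A (\<lambda>p. L p t0) (\<lambda>p. L1 p t0) L2 \<kappa> \<kappa>1
           = - Im k2 * C_sum P m A (\<lambda>p. L p t0) \<kappa> - Re k2 * S_sum P m A (\<lambda>p. L p t0) \<kappa>"
    and "Y_sum P m A (\<lambda>p. L p t0) (\<lambda>p. L1 p t0) L2 \<kappa> \<kappa>1
           = Im k2 * S_sum P m A (\<lambda>p. L p t0) \<kappa> - Re k2 * C_sum P m A (\<lambda>p. L p t0) \<kappa>"
proof -
  define a where "a p = (-1) ^ m p * A p" for p
  define \<phi> where "\<phi> p t = \<i> * k t * of_real (L p t)" for p t
  define \<phi>1 where "\<phi>1 p t = \<i> * (k1 t * of_real (L p t) + k t * of_real (L1 p t))" for p t
  define \<phi>2 where
    "\<phi>2 p = \<i> * (k2 * of_real (L p t0) + 2 * k1 t0 * of_real (L1 p t0) + k t0 * of_real (L2 p))" for p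
  define \<theta> where "\<theta> p = \<kappa> * L p t0" for p
  define u where "u p = \<kappa>1 * L p t0 + \<kappa> * L1 p t0" for p
  define v where "v p = 2 * \<kappa>1 * L1 p t0 + \<kappa> * L2 p" for p
  have d\<phi>: "(\<phi> p has_vector_derivative \<phi>1 p t) (at t)" if "t \<in> S" for p t
    unfolding \<phi>_def[abs_def] \<phi>1_def
    by (rule derivative_eq_intros has_vector_derivative_of_real dL[OF that] dk[OF that]
        | simp add: algebra_simps)+
  have d\<phi>1: "(\<phi>1 p has_vector_derivative \<phi>2 p) (at t0)" for p
    unfolding \<phi>1_def[abs_def] \<phi>2_def
    by (rule derivative_eq_intros has_vector_derivative_of_real dL[OF \<open>t0 \<in> S\<close>] dL1
          dk[OF \<open>t0 \<in> S\<close>] dk1 | simp add: algebra_simps)+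
  have vanish: "(\<Sum>p\<in>P. of_real (a p) * exp (\<phi> p t)) = 0" if "t \<in> S" for t
    using reson[OF that] by (simp add: res_cond_def a_def \<phi>_def mult.assoc)
  note eqs = exp_sum_derivatives_vanish[OF \<open>open S\<close> \<open>t0 \<in> S\<close> vanish d\<phi> d\<phi>1]
  have exp_\<phi>: "exp (\<phi> p t0) = cis (\<theta> p)" for p
    by (simp add: \<phi>_def \<theta>_def k_t0 cis_conv_exp mult.assoc)
  have \<phi>1_t0: "\<phi>1 p t0 = Complex 0 (u p)" for p
    by (simp add: \<phi>1_def k_t0 k1_t0 u_def complex_eq_iff)
  have \<phi>2_t0: "\<phi>2 p + (\<phi>1 p t0)\<^sup>2 = Complex (- Im k2 * L p t0 - (u p)\<^sup>2) (Re k2 * L p t0 + v p)" for p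
    by (simp add: \<phi>2_def \<phi>1_t0 k_t0 k1_t0 v_def complex_eq_iff power2_eq_square algebra_simps)
  have first: "(\<Sum>p\<in>P. a p * (cos (\<theta> p) * u p)) = 0"
    using eqs(1) by (simp add: exp_\<phi> \<phi>1_t0 sum_cis_eq_0_iff)
  have second_re: "(\<Sum>p\<in>P. a p * (cos (\<theta> p) * (- Im k2 * L p t0 - (u p)\<^sup>2)
                                     - sin (\<theta> p) * (Re k2 * L p t0 + v p))) = 0"
    and second_im: "(\<Sum>p\<in>P. a p * (sin (\<theta> p) * (- Im k2 * L p t0 - (u p)\<^sup>2)
                                     + cos (\<theta> p) * (Re k2 * L p t0 + v p))) = 0"
    using eqs(2) unfolding exp_\<phi> \<phi>2_t0 sum_cis_eq_0_iff by simp_all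
  have "\<kappa>1 * C_sum P m A (\<lambda>p. L p t0) \<kappa>
           + \<kappa> * (\<Sum>p\<in>P. L1 p t0 * (-1) ^ m p * A p * cos (\<kappa> * L p t0))
        = (\<Sum>p\<in>P. a p * (cos (\<theta> p) * u p))"
    unfolding C_sum_def sum_distrib_left sum.distrib[symmetric]
    by (rule sum.cong) (simp_all add: a_def \<theta>_def u_def algebra_simps)
  with first show "\<kappa>1 * C_sum P m A (\<lambda>p. L p t0) \<kappa>
           + \<kappa> * (\<Sum>p\<in>P. L1 p t0 * (-1) ^ m p * A p * cos (\<kappa> * L p t0)) = 0"
    by simp
  have "- X_sum P m A (\<lambda>p. L p t0) (\<lambda>p. L1 p t0) L2 \<kappa> \<kappa>1
          - Im k2 * C_sum P m A (\<lambda>p. L p t0) \<kappa> - Re k2 * S_sum P m A (\<lambda>p. L p t0) \<kappa>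
        = (\<Sum>p\<in>P. a p * (cos (\<theta> p) * (- Im k2 * L p t0 - (u p)\<^sup>2) - sin (\<theta> p) * (Re k2 * L p t0 + v p)))"
    unfolding X_sum_eq C_sum_def S_sum_def sum_distrib_left sum_negf[symmetric] sum_subtractf[symmetric]
    by (rule sum.cong) (simp_all add: a_def \<theta>_def u_def v_def algebra_simps)
  with second_re show "X_sum P m A (\<lambda>p. L p t0) (\<lambda>p. L1 p t0) L2 \<kappa> \<kappa>1
           = - Im k2 * C_sum P m A (\<lambda>p. L p t0) \<kappa> - Re k2 * S_sum P m A (\<lambda>p. L p t0) \<kappa>"
    by simp
  have "Y_sum P m A (\<lambda>p. L p t0) (\<lambda>p. L1 p t0) L2 \<kappa> \<kappa>1
          - Im k2 * S_sum P m A (\<lambda>p. L p t0) \<kappa> + Re k2 * C_sum P m A (\<lambda>p. L p t0) \<kappa>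
        = (\<Sum>p\<in>P. a p * (sin (\<theta> p) * (- Im k2 * L p t0 - (u p)\<^sup>2) + cos (\<theta> p) * (Re k2 * L p t0 + v p)))"
    unfolding Y_sum_eq C_sum_def S_sum_def sum_distrib_left sum_subtractf[symmetric] sum.distrib[symmetric]
    by (rule sum.cong) (simp_all add: a_def \<theta>_def u_def v_def algebra_simps)
  with second_im show "Y_sum P m A (\<lambda>p. L p t0) (\<lambda>p. L1 p t0) L2 \<kappa> \<kappa>1
           = Im k2 * S_sum P m A (\<lambda>p. L p t0) \<kappa> - Re k2 * C_sum P m A (\<lambda>p. L p t0) \<kappa>"
    by simp
qed

theorem mainTheorem2:
  fixes N :: nat and P :: "'p set" and nb :: "'p \<Rightarrow> nat \<Rightarrow> nat"
    and m :: "'p \<Rightarrow> nat" and A :: "'p \<Rightarrow> real"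
    and ell ell1 ell2 :: "nat \<Rightarrow> real \<Rightarrow> real"
    and k k1 :: "real \<Rightarrow> complex" and k2 :: complex
    and k0 \<delta> :: real
  assumes finP: "finite P"
    and delta: "\<delta> > 0"
    and lengths: "\<forall>j<N. \<forall>t\<in>ball 0 \<delta>. ell j t > 0
                   \<and> (ell j has_real_derivative ell1 j t) (at t)
                   \<and> (ell1 j has_real_derivative ell2 j t) (at t)"
    and C2: "\<forall>j<N. continuous_on (ball 0 \<delta>) (ell2 j)"
    and nonconst: "\<exists>j<N. \<not> (\<exists>\<epsilon>>0. \<forall>t. \<bar>t\<bar> < \<epsilon> \<longrightarrow> ell j t = ell j 0)"
    and bonds: "\<forall>p\<in>P. \<forall>j<N. nb p j \<le> 2"
    and k0pos: "k0 > 0"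
    and kinit: "k 0 = complex_of_real k0"
    and reson: "\<forall>t\<in>ball 0 \<delta>. res_cond P m A (po_len N nb ell) t (k t) = 0"
    and lowerhalf: "\<forall>t\<in>ball 0 \<delta>. Im (k t) \<le> 0"
    and kder: "\<forall>t\<in>ball 0 \<delta>. (k has_vector_derivative k1 t) (at t)"
    and kder2: "(k1 has_vector_derivative k2) (at 0)"
    and nondeg: "(C_sum P m A (\<lambda>p. po_len N nb ell p 0) k0)\<^sup>2
                 + (S_sum P m A (\<lambda>p. po_len N nb ell p 0) k0)\<^sup>2 \<noteq> 0"
  shows "let L = (\<lambda>p. po_len N nb ell p 0); Ld = (\<lambda>p. po_len N nb ell1 p 0);
             Ldd = (\<lambda>p. po_len N nb ell2 p 0); kd = Re (k1 0);
             C = C_sum P m A L k0; S = S_sum P m A L k0; d = C\<^sup>2 + S\<^sup>2;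
             X = X_sum P m A L Ld Ldd k0 kd; Y = Y_sum P m A L Ld Ldd k0 kd
         in Im (k1 0) = 0
            \<and> (C \<noteq> 0 \<longrightarrow> k1 0 = complex_of_real
                  (- k0 * (\<Sum>p\<in>P. Ld p * (-1) ^ m p * A p * cos (k0 * L p)) / C))
            \<and> Im k2 = - C / d * X + S / d * Y
            \<and> Re k2 = - S / d * X - C / d * Y"
proof -
  have "0 \<in> ball 0 \<delta>"
    using delta by simp
  have Im_k1: "Im (k1 0) = 0"
    by (rule Im_vector_derivative_eq_0_at_local_max[OF kder[rule_format, OF \<open>0 \<in> ball 0 \<delta>\<close>] delta])
      (use lowerhalf kinit in \<open>auto simp: dist_real_def\<close>)
  then have k1_real: "k1 0 = of_real (Re (k1 0))"
    by (simp add: complex_eq_iff)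
  have dL: "(po_len N nb ell p has_real_derivative po_len N nb ell1 p t) (at t)"
    and dL1: "(po_len N nb ell1 p has_real_derivative po_len N nb ell2 p t) (at t)"
    if "t \<in> ball 0 \<delta>" for p t
    using lengths that by (auto intro!: po_len_has_real_derivative)
  note eqs = res_cond_derivative_equations[OF open_ball \<open>0 \<in> ball 0 \<delta>\<close> reson[rule_format] dL
      dL1[OF \<open>0 \<in> ball 0 \<delta>\<close>] kder[rule_format] kder2 kinit k1_real]
  let ?C = "C_sum P m A (\<lambda>p. po_len N nb ell p 0) k0"
  let ?D = "\<Sum>p\<in>P. po_len N nb ell1 p 0 * (-1) ^ m p * A p * cos (k0 * po_len N nb ell p 0)"
  have k1_formula: "?C \<noteq> 0 \<longrightarrow> k1 0 = of_real (- k0 * ?D / ?C)"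
  proof
    assume "?C \<noteq> 0"
    with eqs(1) have "Re (k1 0) = - k0 * ?D / ?C"
      by (simp add: field_simps)
    with k1_real show "k1 0 = of_real (- k0 * ?D / ?C)"
      by simp
  qed
  show ?thesis
    unfolding Let_def using Im_k1 k1_formula CS_linear_system_solve[OF eqs(2,3) nondeg] by blast
qed

end
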